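(* Consider the gradient flow $\frac{d}{dt}\mathbf w=-(I_d-\mathbf w\mathbf w^T)\nabla L(\mathbf w)$ started from a unit vector $\mathbf w(0)$, and let $\mathbf u(t)=V^T\mathbf w(t)\in\mathbb R^k$. Consider the regime in which $d$ is large while $k$, the matrix $A=V^TV$ and the activations $\sigma,\sigma^*$ are fixed (independent of $d$). Assume $\mathbf u_j(0)>0$ and $\mathbf u_j(0)=\Theta(d^{-1/2})$ for all $j\in[k]$, and $p^*\ge 2$. Then: (i) if $p^*\ge 3$, a time $T=\Theta(d^{p^*/2-1})$ is necessary and sufficient to reach $\|\mathbf u(T)\|_2=\Theta(1)$; (ii) if $p^*=2$, a time $T=\Theta(\log d)$ is necessary and sufficient to reach $\|\mathbf u(T)\|_2=\Theta(1)$.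
   Context: Let $h_0=1,h_1(x)=x,h_2(x)=(x^2-1)/\sqrt2,\dots$ be the probabilist's Hermite polynomials normalized to be orthonormal in $L^2$ of the standard Gaussian measure on $\mathbb R$. Let $\sigma,\sigma^*:\mathbb R\to\mathbb R$ be square integrable with respect to the standard Gaussian, with expansions $\sigma=\sum_{p\ge1}a_ph_p$, $\sigma^*=\sum_{p\ge1}b_ph_p$. The information exponent of $\sigma^*$ is $p^*=\min\{p\ge1:b_p\neq0\}$; write $c_p=a_pb_p$. Standing assumptions: $c_{p^*}>0$ and $c_p\ge0$ for all $p\ge p^*$. Let $\mathbf v_1,\dots,\mathbf v_k\in\mathbb R^d$ be linearly independent unit vectors (index vectors), $V=[\mathbf v_1,\dots,\mathbf v_k]$, $A=V^TV$, with $\sum_{p\ge p^*}c_p\,p\,\lambda_{\max}(A)^{p/2}<\infty$, and with $\mathbf v_j^T\mathbf v_{j'}\ge0$ for all $j,j'\in[k]$. The correlation loss is $L(\mathbf w)=C-\mathbb E_{\mathbf x\sim\mathcal N(0,I_d)}\big[\sigma(\mathbf w^T\mathbf x)\sum_{j=1}^k\sigma^*(\mathbf v_j^T\mathbf x)\big]$ for a constant $C$; for unit $\mathbf w$ it equals $C-\sum_{p\ge p^*}c_p\sum_{j=1}^k(\mathbf v_j^T\mathbf w)^p$, and this formula defines $L$ and its Euclidean gradient $\nabla L$ on $\mathbb R^d$. The $\Theta(\cdot)$ statements hide constants independent of $d$. *)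

theory Defs
  imports "HOL-Analysis.Analysis"
begin

(* Vectors of R^d are represented as functions nat => real that vanish
   outside {0..<d} (the dimension d varies, so a type-indexed dimension
   cannot be used).  Index vectors v_1..v_k are V 0, ..., V (k-1). *)

definition ip :: "nat \<Rightarrow> (nat \<Rightarrow> real) \<Rightarrow> (nat \<Rightarrow> real) \<Rightarrow> real" where
  "ip d x y = (\<Sum>i<d. x i * y i)"

(* c_p = a_p b_p from the Hermite coefficients of sigma and sigma^* *)
definition coef_c :: "(nat \<Rightarrow> real) \<Rightarrow> (nat \<Rightarrow> real) \<Rightarrow> nat \<Rightarrow> real" where
  "coef_c a b p = a p * b p"

definition info_exp :: "(nat \<Rightarrow> real) \<Rightarrow> nat" where
  "info_exp b = (LEAST p. 1 \<le> p \<and> b p \<noteq> 0)"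

definition lambda_max :: "nat \<Rightarrow> (nat \<Rightarrow> nat \<Rightarrow> real) \<Rightarrow> real" where
  "lambda_max k A = Max {\<mu>. \<exists>x. (\<exists>j<k. x j \<noteq> 0) \<and>
       (\<forall>j<k. (\<Sum>j'<k. A j j' * x j') = \<mu> * x j)}"

definition corr_loss :: "real \<Rightarrow> (nat \<Rightarrow> real) \<Rightarrow> nat \<Rightarrow> (nat \<Rightarrow> nat \<Rightarrow> real)
    \<Rightarrow> nat \<Rightarrow> (nat \<Rightarrow> real) \<Rightarrow> real" where
  "corr_loss C c k V d w = C - (\<Sum>p. c p * (\<Sum>j<k. (ip d (V j) w) ^ p))"

definition loss_grad :: "(nat \<Rightarrow> real) \<Rightarrow> nat \<Rightarrow> (nat \<Rightarrow> nat \<Rightarrow> real)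
    \<Rightarrow> nat \<Rightarrow> (nat \<Rightarrow> real) \<Rightarrow> nat \<Rightarrow> real" where
  "loss_grad c k V d w i =
     - (\<Sum>p. c p * real p * (\<Sum>j<k. (ip d (V j) w) ^ (p - 1) * V j i))"

definition index_vectors :: "nat \<Rightarrow> (nat \<Rightarrow> nat \<Rightarrow> real) \<Rightarrow> nat
    \<Rightarrow> (nat \<Rightarrow> nat \<Rightarrow> real) \<Rightarrow> bool" where
  "index_vectors k A d V \<longleftrightarrow>
     (\<forall>j<k. \<forall>i. d \<le> i \<longrightarrow> V j i = 0) \<and>
     (\<forall>j<k. \<forall>j'<k. ip d (V j) (V j') = A j j') \<and>
     (\<forall>x. (\<forall>i<d. (\<Sum>j<k. x j * V j i) = 0) \<longrightarrow> (\<forall>j<k. x j = 0))"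

definition sphere_grad_flow :: "(nat \<Rightarrow> real) \<Rightarrow> nat \<Rightarrow> (nat \<Rightarrow> nat \<Rightarrow> real)
    \<Rightarrow> nat \<Rightarrow> (real \<Rightarrow> nat \<Rightarrow> real) \<Rightarrow> bool" where
  "sphere_grad_flow c k V d w \<longleftrightarrow>
     (\<forall>t\<ge>0. \<forall>i. d \<le> i \<longrightarrow> w t i = 0) \<and>
     ip d (w 0) (w 0) = 1 \<and>
     (\<forall>t\<ge>0. \<forall>i<d.
        ((\<lambda>s. w s i) has_real_derivative
           (- (loss_grad c k V d (w t) i
               - w t i * (\<Sum>i'<d. w t i' * loss_grad c k V d (w t) i'))))
        (at t within {0..}))"

definition u_norm :: "nat \<Rightarrow> (nat \<Rightarrow> nat \<Rightarrow> real) \<Rightarrow> nat \<Rightarrow> (nat \<Rightarrow> real) \<Rightarrow> real" where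
  "u_norm k V d x = sqrt (\<Sum>j<k. (ip d (V j) x)^2)"

definition time_scale :: "nat \<Rightarrow> nat \<Rightarrow> real" where
  "time_scale ps d = (if 3 \<le> ps then real d powr (real ps / 2 - 1) else ln (real d))"

end

(* Write q for the information exponent p*.  Projecting the spherical gradient flow onto the index
   vectors gives a closed system for the overlaps u_j = <v_j, w>: as long as all overlaps are at
   most 1/2,
     u_j' = sum_j' phi(u_j') (A_jj' - u_j u_j'),   phi(x) = sum_p c_p p x^(p-1),
   and phi(x) is of exact order x^(q-1) for small x >= 0.  Hence (|u|^2)' <= K |u|^q, while for
   positive overlaps the sum Psi = sum_j u_j satisfies Psi' >= kappa Psi^(q-1).  Both inequalities
   become linear for the potential G with G'(r) = r^(1-q), which is log r for q = 2 and
   -r^(2-q)/(q-2) otherwise.  Overlaps start at size d^(-1/2), and G must grow by an amount of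
   order d^(q/2-1), respectively log d, before they become of order one; this gives matching lower
   and upper bounds for the escape time. *)

theory Submission
  imports Defs
begin

section \<open>The correlation series\<close>

definition corr_deriv :: "(nat \<Rightarrow> real) \<Rightarrow> real \<Rightarrow> real" where
  "corr_deriv c x = (\<Sum>p. c p * real p * x ^ (p - 1))"

locale correlation_series =
  fixes c :: "nat \<Rightarrow> real" and q :: nat
  assumes coeff_nonneg: "\<And>p. 0 \<le> c p"
    and coeff_below: "\<And>p. p < q \<Longrightarrow> c p = 0"
    and coeff_leading: "0 < c q"
    and exponent_ge2: "2 \<le> q"
    and coeff_summable: "summable (\<lambda>p. c p * real p * (1/2) ^ p)"
begin

definition deriv_bound :: real where
  "deriv_bound = 2 ^ q * (\<Sum>p. c p * real p * (1/2) ^ p)"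

lemma deriv_bound_nonneg: "0 \<le> deriv_bound"
  unfolding deriv_bound_def
  by (simp add: suminf_nonneg[OF coeff_summable] coeff_nonneg)

lemma corr_deriv_term_bound:
  assumes "\<bar>x\<bar> \<le> 1/2"
  shows "\<bar>c p * real p * x ^ (p - 1)\<bar> \<le> \<bar>x\<bar> ^ (q - 1) * (2 ^ q * (c p * real p * (1/2) ^ p))"
proof (cases "p < q")
  case True
  then show ?thesis by (simp add: coeff_below)
next
  case False
  then have split: "p - 1 = (q - 1) + (p - q)" using exponent_ge2 by simp
  have "\<bar>x\<bar> ^ (p - q) \<le> (1/2) ^ (p - q)"
    using assms by (intro power_mono) auto
  also have "(1/2::real) ^ (p - q) = 2 ^ q * (1/2) ^ p"
    using False by (simp add: power_diff power_one_over)
  finally have pow: "\<bar>x\<bar> ^ (p - q) \<le> 2 ^ q * (1/2::real) ^ p" .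
  have "\<bar>c p * real p * x ^ (p - 1)\<bar> = c p * real p * (\<bar>x\<bar> ^ (q - 1) * \<bar>x\<bar> ^ (p - q))"
    by (simp add: abs_mult power_abs coeff_nonneg split power_add del: One_nat_def)
  also have "\<dots> \<le> c p * real p * (\<bar>x\<bar> ^ (q - 1) * (2 ^ q * (1/2) ^ p))"
    using pow by (intro mult_left_mono) (auto simp: coeff_nonneg)
  finally show ?thesis by (simp only: mult_ac)
qed

lemma summable_corr_deriv_abs:
  assumes "\<bar>x\<bar> \<le> 1/2"
  shows "summable (\<lambda>p. \<bar>c p * real p * x ^ (p - 1)\<bar>)"
  by (rule summable_comparison_test'[OF summable_mult[OF summable_mult[OF coeff_summable]]])
     (use corr_deriv_term_bound[OF assms] in auto)

lemma summable_corr_deriv: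
  assumes "\<bar>x\<bar> \<le> 1/2"
  shows "summable (\<lambda>p. c p * real p * x ^ (p - 1))"
  using summable_corr_deriv_abs[OF assms] by (rule summable_rabs_cancel)

lemma abs_corr_deriv_le:
  assumes "\<bar>x\<bar> \<le> 1/2"
  shows "\<bar>corr_deriv c x\<bar> \<le> deriv_bound * \<bar>x\<bar> ^ (q - 1)"
proof -
  have bound: "summable (\<lambda>p. \<bar>x\<bar> ^ (q - 1) * (2 ^ q * (c p * real p * (1/2) ^ p)))"
    by (intro summable_mult coeff_summable)
  have "\<bar>corr_deriv c x\<bar> \<le> (\<Sum>p. \<bar>c p * real p * x ^ (p - 1)\<bar>)"
    unfolding corr_deriv_def by (rule summable_rabs[OF summable_corr_deriv_abs[OF assms]])
  also have "\<dots> \<le> (\<Sum>p. \<bar>x\<bar> ^ (q - 1) * (2 ^ q * (c p * real p * (1/2) ^ p)))"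
    by (rule suminf_le[OF corr_deriv_term_bound[OF assms] summable_corr_deriv_abs[OF assms] bound])
  also have "\<dots> = deriv_bound * \<bar>x\<bar> ^ (q - 1)"
    unfolding deriv_bound_def using coeff_summable by (simp add: suminf_mult)
  finally show ?thesis .
qed

lemma corr_deriv_ge_leading:
  assumes "0 \<le> x" "x \<le> 1/2"
  shows "c q * real q * x ^ (q - 1) \<le> corr_deriv c x"
proof -
  have "(\<Sum>p\<in>{q}. c p * real p * x ^ (p - 1)) \<le> corr_deriv c x"
    unfolding corr_deriv_def
    by (rule sum_le_suminf[OF summable_corr_deriv]) (use assms coeff_nonneg in auto)
  then show ?thesis by simp
qed

lemma corr_deriv_nonneg:
  assumes "0 \<le> x" "x \<le> 1/2"
  shows "0 \<le> corr_deriv c x"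
proof -
  have "0 \<le> c q * real q * x ^ (q - 1)"
    using coeff_leading assms(1) by simp
  with corr_deriv_ge_leading[OF assms] show ?thesis by linarith
qed

definition sum_growth :: "nat \<Rightarrow> real" where
  "sum_growth k = c q * real q / (2 * real k ^ (q - 1))"

definition norm_growth :: "nat \<Rightarrow> (nat \<Rightarrow> nat \<Rightarrow> real) \<Rightarrow> real" where
  "norm_growth k A = 2 * deriv_bound * (\<Sum>j<k. \<Sum>j'<k. A j j' + 1) + 1"

lemma sum_growth_pos: "1 \<le> k \<Longrightarrow> 0 < sum_growth k"
  unfolding sum_growth_def using coeff_leading exponent_ge2 by simp

lemma norm_growth_pos:
  assumes "\<And>j j'. j < k \<Longrightarrow> j' < k \<Longrightarrow> 0 \<le> A j j'"
  shows "0 < norm_growth k A"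
  unfolding norm_growth_def using deriv_bound_nonneg assms
  by (intro add_nonneg_pos mult_nonneg_nonneg sum_nonneg) auto

end

section \<open>Overlap dynamics of the spherical gradient flow\<close>

definition overlap_drift ::
    "(nat \<Rightarrow> real) \<Rightarrow> nat \<Rightarrow> (nat \<Rightarrow> nat \<Rightarrow> real) \<Rightarrow> (nat \<Rightarrow> real) \<Rightarrow> nat \<Rightarrow> real" where
  "overlap_drift c k A x j = (\<Sum>j'<k. corr_deriv c (x j') * (A j j' - x j * x j'))"

lemma overlap_drift_split:
  "overlap_drift c k A x j
     = (\<Sum>j'<k. corr_deriv c (x j') * A j j') - x j * (\<Sum>j'<k. corr_deriv c (x j') * x j')"
  unfolding overlap_drift_def by (simp add: right_diff_distrib sum_subtractf sum_distrib_left mult_ac)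

lemma sum_overlap_drift:
  "(\<Sum>j<k. overlap_drift c k A x j)
     = (\<Sum>j'<k. corr_deriv c (x j') * ((\<Sum>j<k. A j j') - x j' * (\<Sum>j<k. x j)))"
proof -
  have "(\<Sum>j<k. overlap_drift c k A x j) = (\<Sum>j'<k. \<Sum>j<k. corr_deriv c (x j') * (A j j' - x j * x j'))"
    unfolding overlap_drift_def by (rule sum.swap)
  also have "\<dots> = (\<Sum>j'<k. corr_deriv c (x j') * (\<Sum>j<k. A j j' - x j * x j'))"
    by (simp add: sum_distrib_left)
  also have "\<dots> = (\<Sum>j'<k. corr_deriv c (x j') * ((\<Sum>j<k. A j j') - x j' * (\<Sum>j<k. x j)))"
    by (simp add: sum_subtractf sum_distrib_left mult.commute)
  finally show ?thesis .
qed

lemma ip_commute: "ip d x y = ip d y x"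
  unfolding ip_def by (simp add: mult.commute)

lemma ip_sum_right: "ip d x (\<lambda>i. \<Sum>j\<in>J. a j * y j i) = (\<Sum>j\<in>J. a j * ip d x (y j))"
  unfolding ip_def by (simp add: sum_distrib_left sum.swap[of _ J] mult_ac)

lemma loss_grad_eq_corr_deriv:
  assumes "\<And>j. j < k \<Longrightarrow> summable (\<lambda>p. c p * real p * ip d (V j) y ^ (p - 1))"
  shows "loss_grad c k V d y i = - (\<Sum>j<k. corr_deriv c (ip d (V j) y) * V j i)"
proof -
  have "(\<Sum>p. c p * real p * (\<Sum>j<k. ip d (V j) y ^ (p - 1) * V j i))
      = (\<Sum>p. \<Sum>j<k. c p * real p * ip d (V j) y ^ (p - 1) * V j i)"
    by (simp add: sum_distrib_left mult.assoc)
  also have "\<dots> = (\<Sum>j<k. \<Sum>p. c p * real p * ip d (V j) y ^ (p - 1) * V j i)"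
    by (rule suminf_sum) (rule summable_mult2, rule assms, simp)
  also have "\<dots> = (\<Sum>j<k. corr_deriv c (ip d (V j) y) * V j i)"
    unfolding corr_deriv_def by (intro sum.cong refl suminf_mult2[symmetric] assms) simp
  finally show ?thesis unfolding loss_grad_def by simp
qed

lemma continuous_on_flow_overlap:
  assumes "sphere_grad_flow c k V d w"
  shows "continuous_on {0..} (\<lambda>s. ip d x (w s))"
proof -
  have "continuous_on {0..} (\<lambda>s. w s i)" if "i < d" for i
    unfolding continuous_on_eq_continuous_within
    using assms that unfolding sphere_grad_flow_def by (meson DERIV_continuous atLeast_iff)
  then show ?thesis unfolding ip_def by (intro continuous_intros) auto
qed

lemma (in correlation_series) flow_overlap_has_derivative:
  assumes flow: "sphere_grad_flow c k V d w" and iv: "index_vectors k A d V"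
    and t: "0 < t" and small: "\<forall>j'<k. \<bar>ip d (V j') (w t)\<bar> \<le> 1/2" and j: "j < k"
  shows "((\<lambda>s. ip d (V j) (w s)) has_real_derivative
           overlap_drift c k A (\<lambda>j'. ip d (V j') (w t)) j) (at t)"
proof -
  define x where "x j' = ip d (V j') (w t)" for j'
  define G where "G i = (\<Sum>j'<k. corr_deriv c (x j') * V j' i)" for i
  have grad: "loss_grad c k V d (w t) i = - G i" for i
    unfolding G_def x_def by (rule loss_grad_eq_corr_deriv) (use small summable_corr_deriv in auto)
  have at_t: "at t within {0..} = at t"
    by (rule at_within_interior) (use t in \<open>simp add: interior_real_atLeast\<close>)
  have "((\<lambda>s. w s i) has_real_derivative G i - w t i * ip d (w t) G) (at t)" if "i < d" for i
  proof -
    have "((\<lambda>s. w s i) has_real_derivative - (loss_grad c k V d (w t) i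
        - w t i * (\<Sum>i'<d. w t i' * loss_grad c k V d (w t) i'))) (at t within {0..})"
      using flow t that unfolding sphere_grad_flow_def by simp
    then show ?thesis unfolding at_t by (simp add: grad ip_def sum_negf)
  qed
  then have "((\<lambda>s. ip d (V j) (w s)) has_real_derivative
      ip d (V j) (\<lambda>i. G i - w t i * ip d (w t) G)) (at t)"
    unfolding ip_def by (auto intro!: DERIV_sum DERIV_cmult)
  also have "ip d (V j) (\<lambda>i. G i - w t i * ip d (w t) G) = ip d (V j) G - x j * ip d (w t) G"
  proof -
    have "ip d (V j) (\<lambda>i. G i - w t i * S) = ip d (V j) G - x j * S" for S
      unfolding ip_def x_def by (simp add: right_diff_distrib sum_subtractf sum_distrib_left mult_ac)
    then show ?thesis .
  qed
  also have "\<dots> = overlap_drift c k A x j"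
  proof -
    have "ip d (V j) G = (\<Sum>j'<k. corr_deriv c (x j') * A j j')"
      unfolding G_def ip_sum_right using iv j unfolding index_vectors_def by simp
    moreover have "ip d (w t) G = (\<Sum>j'<k. corr_deriv c (x j') * x j')"
      unfolding G_def ip_sum_right x_def by (simp add: ip_commute)
    ultimately show ?thesis
      unfolding overlap_drift_def by (simp add: right_diff_distrib sum_subtractf sum_distrib_left mult_ac)
  qed
  finally show ?thesis unfolding x_def .
qed

section \<open>Comparison principles\<close>

lemma increment_ge_of_deriv_ge:
  fixes h :: "real \<Rightarrow> real"
  assumes "a \<le> b" and "continuous_on {a..b} h"
    and "\<And>x. a < x \<Longrightarrow> x < b \<Longrightarrow> \<exists>y. (h has_real_derivative y) (at x) \<and> L \<le> y"
  shows "h a + L * (b - a) \<le> h b"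
proof -
  have "h a - L * a \<le> h b - L * b"
  proof (rule DERIV_nonneg_imp_increasing_open[OF assms(1)])
    fix x assume "a < x" "x < b"
    with assms(3) obtain y where "(h has_real_derivative y) (at x)" "L \<le> y" by blast
    then show "\<exists>y. ((\<lambda>x. h x - L * x) has_real_derivative y) (at x) \<and> 0 \<le> y"
      by (intro exI[of _ "y - L"]) (auto intro!: derivative_eq_intros)
  qed (use assms(2) in \<open>intro continuous_intros\<close>)
  then show ?thesis by (simp add: algebra_simps)
qed

lemma gronwall_exp_lower:
  fixes f :: "real \<Rightarrow> real"
  assumes "0 \<le> t" and cont: "continuous_on {0..t} f"
    and der: "\<And>\<tau>. 0 < \<tau> \<Longrightarrow> \<tau> < t \<Longrightarrow> \<exists>D. (f has_real_derivative D) (at \<tau>) \<and> \<kappa> * f \<tau> \<le> D"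
  shows "f 0 * exp (\<kappa> * t) \<le> f t"
proof -
  have "f 0 * exp (- \<kappa> * 0) + 0 * (t - 0) \<le> f t * exp (- \<kappa> * t)"
  proof (rule increment_ge_of_deriv_ge[OF assms(1)])
    show "continuous_on {0..t} (\<lambda>\<tau>. f \<tau> * exp (- \<kappa> * \<tau>))"
      by (intro continuous_intros cont)
    fix \<tau> assume "0 < \<tau>" "\<tau> < t"
    with der obtain D where "(f has_real_derivative D) (at \<tau>)" "\<kappa> * f \<tau> \<le> D" by blast
    then show "\<exists>y. ((\<lambda>\<tau>. f \<tau> * exp (- \<kappa> * \<tau>)) has_real_derivative y) (at \<tau>) \<and> 0 \<le> y"
      by (intro exI[of _ "(D - \<kappa> * f \<tau>) * exp (- \<kappa> * \<tau>)"])
         (auto intro!: derivative_eq_intros simp: algebra_simps)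
  qed
  then have "f 0 * exp (\<kappa> * t) \<le> f t * exp (- \<kappa> * t) * exp (\<kappa> * t)"
    by (intro mult_right_mono) auto
  then show ?thesis by (simp add: mult.assoc flip: exp_add)
qed

text \<open>An antiderivative of \<open>r\<^sup>1\<^sup>-\<^sup>q\<close> on \<open>r > 0\<close>: it turns the differential
  inequalities \<open>f' \<le> K f\<^sup>q\<^sup>-\<^sup>1\<close> and \<open>f' \<ge> \<kappa> f\<^sup>q\<^sup>-\<^sup>1\<close> into linear ones.\<close>
definition growth_potential :: "nat \<Rightarrow> real \<Rightarrow> real" where
  "growth_potential q r = (if q = 2 then ln r else - 1 / (real (q - 2) * r ^ (q - 2)))"

lemma growth_potential_has_derivative:
  assumes "2 \<le> q" and "0 < r"
  shows "(growth_potential q has_real_derivative 1 / r ^ (q - 1)) (at r)"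
proof (cases "q = 2")
  case True
  have "(ln has_real_derivative 1 / r) (at r)"
    using assms(2) by (auto intro!: derivative_eq_intros)
  with True show ?thesis by (simp add: growth_potential_def[abs_def])
next
  case False
  define m where "m = q - 2"
  have m: "0 < m" "q - 1 = Suc m" using assms(1) False unfolding m_def by auto
  have "((\<lambda>r. - 1 / (real m * r ^ m)) has_real_derivative 1 / r ^ Suc m) (at r)"
    using assms(2) m(1) by (auto intro!: derivative_eq_intros simp: field_simps power_eq_if[of r m])
  with False m(2) show ?thesis by (simp add: growth_potential_def[abs_def] m_def)
qed

lemma continuous_on_growth_potential:
  assumes "2 \<le> q"
  shows "continuous_on {0<..} (growth_potential q)"
  unfolding continuous_on_eq_continuous_at[OF open_greaterThan]
  by (auto intro!: DERIV_isCont[OF growth_potential_has_derivative[OF assms]])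

lemma growth_potential_strict_mono:
  assumes "2 \<le> q" and "0 < r" and "r < s"
  shows "growth_potential q r < growth_potential q s"
proof (rule DERIV_pos_imp_increasing[OF assms(3)])
  fix x assume "r \<le> x" "x \<le> s"
  then have "0 < x" using assms(2) by linarith
  then show "\<exists>y. (growth_potential q has_real_derivative y) (at x) \<and> 0 < y"
    using growth_potential_has_derivative[OF assms(1)] by (intro exI[of _ "1 / x ^ (q - 1)"]) auto
qed

lemma growth_potential_less_iff:
  assumes "2 \<le> q" and "0 < r" and "0 < s"
  shows "growth_potential q r < growth_potential q s \<longleftrightarrow> r < s"
  using growth_potential_strict_mono[OF assms(1)] assms(2,3)
  by (metis less_asym linorder_neqE_linordered_idom)

lemma growth_potential_le_iff:
  assumes "2 \<le> q" and "0 < r" and "0 < s"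
  shows "growth_potential q r \<le> growth_potential q s \<longleftrightarrow> r \<le> s"
  using growth_potential_less_iff[OF assms(1) assms(3,2)] by (simp add: not_less[symmetric])

lemma growth_potential_comp_has_derivative:
  assumes "2 \<le> q" and "0 < f x" and "(f has_real_derivative f') (at x)"
  shows "((\<lambda>x. growth_potential q (f x)) has_real_derivative f' / f x ^ (q - 1)) (at x)"
  using DERIV_chain2[OF growth_potential_has_derivative[OF assms(1,2)] assms(3)] by simp

lemma continuous_on_growth_potential_comp:
  assumes "2 \<le> q" and "continuous_on S f" and "\<And>x. x \<in> S \<Longrightarrow> 0 < f x"
  shows "continuous_on S (\<lambda>x. growth_potential q (f x))"
  by (rule continuous_on_compose2[OF continuous_on_growth_potential[OF assms(1)] assms(2)])
     (use assms(3) in auto)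

lemma growth_potential_increment_ge:
  fixes f :: "real \<Rightarrow> real"
  assumes q: "2 \<le> q" and "0 \<le> t" and cont: "continuous_on {0..t} f"
    and pos: "\<And>\<tau>. 0 \<le> \<tau> \<Longrightarrow> \<tau> \<le> t \<Longrightarrow> 0 < f \<tau>"
    and der: "\<And>\<tau>. 0 < \<tau> \<Longrightarrow> \<tau> < t \<Longrightarrow>
      \<exists>D. (f has_real_derivative D) (at \<tau>) \<and> L * f \<tau> ^ (q - 1) \<le> D"
  shows "growth_potential q (f 0) + L * t \<le> growth_potential q (f t)"
proof -
  have "growth_potential q (f 0) + L * (t - 0) \<le> growth_potential q (f t)"
  proof (rule increment_ge_of_deriv_ge[OF assms(2)])
    show "continuous_on {0..t} (\<lambda>\<tau>. growth_potential q (f \<tau>))"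
      by (rule continuous_on_growth_potential_comp[OF q cont]) (use pos in auto)
    fix \<tau> assume \<tau>: "0 < \<tau>" "\<tau> < t"
    with der obtain D where D: "(f has_real_derivative D) (at \<tau>)" "L * f \<tau> ^ (q - 1) \<le> D" by blast
    have "0 < f \<tau>" using pos \<tau> by simp
    with D show "\<exists>y. ((\<lambda>\<tau>. growth_potential q (f \<tau>)) has_real_derivative y) (at \<tau>) \<and> L \<le> y"
      by (intro exI[of _ "D / f \<tau> ^ (q - 1)"] conjI growth_potential_comp_has_derivative[OF q])
         (simp_all add: le_divide_eq)
  qed
  then show ?thesis by simp
qed

lemma growth_potential_increment_le:
  fixes f :: "real \<Rightarrow> real"
  assumes q: "2 \<le> q" and "0 \<le> t" and cont: "continuous_on {0..t} f"
    and pos: "\<And>\<tau>. 0 \<le> \<tau> \<Longrightarrow> \<tau> \<le> t \<Longrightarrow> 0 < f \<tau>"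
    and der: "\<And>\<tau>. 0 < \<tau> \<Longrightarrow> \<tau> < t \<Longrightarrow>
      \<exists>D. (f has_real_derivative D) (at \<tau>) \<and> D \<le> K * f \<tau> ^ (q - 1)"
  shows "growth_potential q (f t) \<le> growth_potential q (f 0) + K * t"
proof -
  have "- growth_potential q (f 0) + (- K) * (t - 0) \<le> - growth_potential q (f t)"
  proof (rule increment_ge_of_deriv_ge[OF assms(2)])
    show "continuous_on {0..t} (\<lambda>\<tau>. - growth_potential q (f \<tau>))"
      by (intro continuous_intros continuous_on_growth_potential_comp[OF q cont]) (use pos in auto)
    fix \<tau> assume \<tau>: "0 < \<tau>" "\<tau> < t"
    with der obtain D where D: "(f has_real_derivative D) (at \<tau>)" "D \<le> K * f \<tau> ^ (q - 1)" by blast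
    have "0 < f \<tau>" using pos \<tau> by simp
    with D show "\<exists>y. ((\<lambda>\<tau>. - growth_potential q (f \<tau>)) has_real_derivative y) (at \<tau>) \<and> - K \<le> y"
      by (intro exI[of _ "- (D / f \<tau> ^ (q - 1))"] conjI DERIV_minus
          growth_potential_comp_has_derivative[OF q]) (simp_all add: divide_le_eq)
  qed
  then show ?thesis by simp
qed

lemma continuous_induction_pos:
  fixes g :: "'i \<Rightarrow> real \<Rightarrow> real"
  assumes "finite I" and cont: "\<And>i. i \<in> I \<Longrightarrow> continuous_on {a..b} (g i)"
    and step: "\<And>t i. a \<le> t \<Longrightarrow> t \<le> b \<Longrightarrow> (\<And>\<tau> i. a \<le> \<tau> \<Longrightarrow> \<tau> < t \<Longrightarrow> i \<in> I \<Longrightarrow> 0 \<le> g i \<tau>)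
       \<Longrightarrow> i \<in> I \<Longrightarrow> 0 < g i t"
    and t: "a \<le> t" "t \<le> b" and i: "i \<in> I"
  shows "0 < g i t"
proof (rule ccontr)
  define S where "S = (\<Union>i\<in>I. {a..b} \<inter> g i -` {..0})"
  assume "\<not> 0 < g i t"
  with t i have "t \<in> S" unfolding S_def by (force simp: not_less)
  have "closed S"
    unfolding S_def using assms(1) cont
    by (intro closed_UN ballI continuous_closed_preimage) auto
  moreover have "bdd_below S" unfolding S_def by (rule bdd_belowI[of _ a]) auto
  ultimately have "Inf S \<in> S" using \<open>t \<in> S\<close> closed_contains_Inf by blast
  then obtain i0 where i0: "i0 \<in> I" "g i0 (Inf S) \<le> 0" and range: "a \<le> Inf S" "Inf S \<le> b"
    unfolding S_def by auto
  have "0 \<le> g i \<tau>" if "a \<le> \<tau>" "\<tau> < Inf S" "i \<in> I" for \<tau> i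
  proof (rule ccontr)
    assume "\<not> 0 \<le> g i \<tau>"
    with that range have "\<tau> \<in> S" unfolding S_def by (force simp: not_le)
    then show False using cInf_lower[OF _ \<open>bdd_below S\<close>] that(2) by fastforce
  qed
  with step[OF range _ i0(1)] i0(2) show False by fastforce
qed

lemma ex_ge_average:
  fixes f :: "'a \<Rightarrow> real"
  assumes "finite I" and "I \<noteq> {}"
  shows "\<exists>i\<in>I. sum f I / real (card I) \<le> f i"
proof -
  have "Max (f ` I) \<in> f ` I"
    using assms by simp
  then obtain i where i: "Max (f ` I) = f i" "i \<in> I"
    by (rule imageE)
  have "sum f I \<le> real (card I) * f i"
    using assms(1) i(1) by (intro sum_bounded_above) (metis Max_ge finite_imageI imageI)
  moreover have "0 < real (card I)"
    using assms by (simp add: card_gt_0_iff)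
  ultimately show ?thesis
    using i(2) by (intro bexI[of _ i]) (simp_all add: divide_le_eq mult.commute)
qed

section \<open>Dynamics while the overlaps are small\<close>

text \<open>The drift formula is only available while the series defining the gradient converge,
  which is guaranteed for overlaps of size at most \<open>1/2\<close>.\<close>
locale overlap_dynamics = correlation_series c q
  for c :: "nat \<Rightarrow> real" and q :: nat +
  fixes k :: nat and A :: "nat \<Rightarrow> nat \<Rightarrow> real" and u :: "real \<Rightarrow> nat \<Rightarrow> real"
  assumes dim_pos: "1 \<le> k"
    and gram_nonneg: "\<And>j j'. j < k \<Longrightarrow> j' < k \<Longrightarrow> 0 \<le> A j j'"
    and gram_diag: "\<And>j. j < k \<Longrightarrow> A j j = 1"
    and overlap_cont: "\<And>j. continuous_on {0..} (\<lambda>t. u t j)"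
    and overlap_deriv: "\<And>t j. 0 < t \<Longrightarrow> (\<forall>j'<k. \<bar>u t j'\<bar> \<le> 1/2) \<Longrightarrow> j < k \<Longrightarrow>
       ((\<lambda>s. u s j) has_real_derivative overlap_drift c k A (u t) j) (at t)"
begin

abbreviation drift :: "real \<Rightarrow> nat \<Rightarrow> real" where
  "drift t \<equiv> overlap_drift c k A (u t)"

definition sq_norm :: "real \<Rightarrow> real" where
  "sq_norm t = (\<Sum>j<k. (u t j)\<^sup>2)"

definition overlap_sum :: "real \<Rightarrow> real" where
  "overlap_sum t = (\<Sum>j<k. u t j)"

lemma sq_norm_nonneg: "0 \<le> sq_norm t"
  unfolding sq_norm_def by (intro sum_nonneg) auto

lemma continuous_on_sq_norm: "continuous_on {0..} sq_norm"
  unfolding sq_norm_def[abs_def]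
  by (intro continuous_intros continuous_on_subset[OF overlap_cont]) auto

lemma abs_overlap_le_norm:
  assumes "j < k"
  shows "\<bar>u t j\<bar> \<le> sqrt (sq_norm t)"
proof -
  have "(u t j)\<^sup>2 \<le> sq_norm t"
    unfolding sq_norm_def using assms by (intro member_le_sum) auto
  then show ?thesis by (intro real_le_rsqrt) simp
qed

lemma abs_overlaps_le_of_norm_le:
  assumes "sqrt (sq_norm t) \<le> r"
  shows "\<forall>j<k. \<bar>u t j\<bar> \<le> r"
  using abs_overlap_le_norm assms order_trans by blast

lemma abs_drift_le:
  assumes small: "\<forall>j'<k. \<bar>u t j'\<bar> \<le> 1/2" and j: "j < k"
  shows "\<bar>drift t j\<bar> \<le> deriv_bound * sqrt (sq_norm t) ^ (q - 1) * (\<Sum>j'<k. A j j' + 1)"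
proof -
  let ?r = "sqrt (sq_norm t)"
  have "\<bar>drift t j\<bar> \<le> (\<Sum>j'<k. \<bar>corr_deriv c (u t j')\<bar> * \<bar>A j j' - u t j * u t j'\<bar>)"
    unfolding overlap_drift_def by (rule order_trans[OF sum_abs]) (simp add: abs_mult)
  also have "\<dots> \<le> (\<Sum>j'<k. deriv_bound * ?r ^ (q - 1) * (A j j' + 1))"
  proof (rule sum_mono)
    fix j' assume j': "j' \<in> {..<k}"
    have "\<bar>corr_deriv c (u t j')\<bar> \<le> deriv_bound * \<bar>u t j'\<bar> ^ (q - 1)"
      using small j' by (intro abs_corr_deriv_le) auto
    also have "\<dots> \<le> deriv_bound * ?r ^ (q - 1)"
      using abs_overlap_le_norm j' deriv_bound_nonneg by (intro mult_left_mono power_mono) auto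
    finally have "\<bar>corr_deriv c (u t j')\<bar> \<le> deriv_bound * ?r ^ (q - 1)" .
    moreover have "\<bar>u t j\<bar> * \<bar>u t j'\<bar> \<le> 1 * 1"
      using small j j' by (intro mult_mono) auto
    then have "\<bar>A j j' - u t j * u t j'\<bar> \<le> A j j' + 1"
      using gram_nonneg[of j j'] j j' abs_triangle_ineq4[of "A j j'" "u t j * u t j'"]
      by (simp add: abs_mult)
    ultimately show "\<bar>corr_deriv c (u t j')\<bar> * \<bar>A j j' - u t j * u t j'\<bar>
        \<le> deriv_bound * ?r ^ (q - 1) * (A j j' + 1)"
      by (intro mult_mono) auto
  qed
  finally show ?thesis by (simp add: sum_distrib_left)
qed

lemma sq_norm_has_derivative:
  assumes t: "0 < t" and small: "\<forall>j<k. \<bar>u t j\<bar> \<le> 1/2"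
  shows "\<exists>D. (sq_norm has_real_derivative D) (at t) \<and> D \<le> norm_growth k A * sqrt (sq_norm t) ^ q"
proof (intro exI conjI)
  let ?r = "sqrt (sq_norm t)"
  show "(sq_norm has_real_derivative (\<Sum>j<k. 2 * u t j * drift t j)) (at t)"
    unfolding sq_norm_def[abs_def]
    by (intro DERIV_sum) (auto intro!: derivative_eq_intros overlap_deriv[OF t small])
  have "(\<Sum>j<k. 2 * u t j * drift t j)
      \<le> (\<Sum>j<k. 2 * ?r * (deriv_bound * ?r ^ (q - 1) * (\<Sum>j'<k. A j j' + 1)))"
  proof (rule sum_mono)
    fix j assume j: "j \<in> {..<k}"
    have "2 * u t j * drift t j \<le> 2 * \<bar>u t j\<bar> * \<bar>drift t j\<bar>"
      by (simp add: abs_mult[symmetric])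
    also have "\<dots> \<le> 2 * ?r * (deriv_bound * ?r ^ (q - 1) * (\<Sum>j'<k. A j j' + 1))"
      using abs_overlap_le_norm abs_drift_le[OF small] j sq_norm_nonneg by (intro mult_mono) auto
    finally show "2 * u t j * drift t j \<le> 2 * ?r * (deriv_bound * ?r ^ (q - 1) * (\<Sum>j'<k. A j j' + 1))" .
  qed
  also have "\<dots> = (norm_growth k A - 1) * (?r * ?r ^ (q - 1))"
    unfolding norm_growth_def by (simp add: sum_distrib_left sum_distrib_right mult_ac)
  also have "?r * ?r ^ (q - 1) = ?r ^ q"
    using exponent_ge2 by (simp add: power_eq_if[of _ q])
  also have "(norm_growth k A - 1) * ?r ^ q \<le> norm_growth k A * ?r ^ q"
    using sq_norm_nonneg[of t] by (simp add: left_diff_distrib)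
  finally show "(\<Sum>j<k. 2 * u t j * drift t j) \<le> norm_growth k A * ?r ^ q" .
qed

lemma shifted_norm_has_derivative:
  assumes t: "0 < t" and small: "\<forall>j<k. \<bar>u t j\<bar> \<le> 1/2" and \<rho>: "0 < \<rho>"
  shows "\<exists>D. ((\<lambda>s. sqrt (sq_norm s + \<rho>)) has_real_derivative D) (at t)
           \<and> D \<le> norm_growth k A / 2 * sqrt (sq_norm t + \<rho>) ^ (q - 1)"
proof -
  let ?R = "sqrt (sq_norm t + \<rho>)"
  obtain D where D: "(sq_norm has_real_derivative D) (at t)" "D \<le> norm_growth k A * sqrt (sq_norm t) ^ q"
    using sq_norm_has_derivative[OF t small] by blast
  have R: "0 < ?R" using \<rho> sq_norm_nonneg[of t] by simp
  have "sqrt (sq_norm t) ^ q \<le> ?R ^ q"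
    using \<rho> sq_norm_nonneg[of t] by (intro power_mono) auto
  then have "D \<le> norm_growth k A * ?R ^ q"
    using D(2) norm_growth_pos[OF gram_nonneg] by (meson less_imp_le mult_left_mono order_trans)
  also have "\<dots> = norm_growth k A / 2 * ?R ^ (q - 1) * (2 * ?R)"
    using exponent_ge2 by (simp add: power_eq_if[of _ q])
  finally have "D / (2 * ?R) \<le> norm_growth k A / 2 * ?R ^ (q - 1)"
    using R by (simp add: divide_le_eq)
  moreover have "((\<lambda>s. sqrt (sq_norm s + \<rho>)) has_real_derivative D / (2 * ?R)) (at t)"
    using D(1) R by (auto intro!: derivative_eq_intros simp: field_simps)
  ultimately show ?thesis by blast
qed

lemma norm_stays_below:
  assumes e: "0 < e" "e \<le> 1/2" and \<rho>: "0 < \<rho>"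
    and budget: "growth_potential q (sqrt (sq_norm 0 + \<rho>)) + norm_growth k A / 2 * X < growth_potential q e"
    and t: "0 \<le> t" "t \<le> X"
  shows "sqrt (sq_norm t) < e"
proof -
  \<comment> \<open>The shift by \<open>\<rho>\<close> keeps the compared quantity positive, where the potential is defined.\<close>
  let ?R = "\<lambda>s. sqrt (sq_norm s + \<rho>)"
  have R_pos: "0 < ?R s" for s
    using \<rho> sq_norm_nonneg[of s] by simp
  have "0 < e - ?R t"
  proof (rule continuous_induction_pos[where I = "{()}" and g = "\<lambda>_ s. e - ?R s"])
    show "continuous_on {0..X} (\<lambda>s. e - ?R s)"
      by (intro continuous_intros continuous_on_subset[OF continuous_on_sq_norm]) auto
  next
    fix s assume s: "0 \<le> s" "s \<le> X"
      and below: "\<And>\<tau> i. 0 \<le> \<tau> \<Longrightarrow> \<tau> < s \<Longrightarrow> i \<in> {()} \<Longrightarrow> 0 \<le> e - ?R \<tau>"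
    have "growth_potential q (?R s) \<le> growth_potential q (?R 0) + norm_growth k A / 2 * s"
    proof (rule growth_potential_increment_le[OF exponent_ge2 s(1)])
      show "continuous_on {0..s} ?R"
        by (intro continuous_intros continuous_on_subset[OF continuous_on_sq_norm]) auto
      fix \<tau> assume \<tau>: "0 < \<tau>" "\<tau> < s"
      have "sqrt (sq_norm \<tau>) \<le> ?R \<tau>" "?R \<tau> \<le> e"
        using \<rho> below[of \<tau> "()"] \<tau> by auto
      then have "sqrt (sq_norm \<tau>) \<le> 1/2"
        using e(2) by linarith
      then show "\<exists>D. (?R has_real_derivative D) (at \<tau>) \<and> D \<le> norm_growth k A / 2 * ?R \<tau> ^ (q - 1)"
        by (intro shifted_norm_has_derivative[OF \<tau>(1) abs_overlaps_le_of_norm_le \<rho>])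
    qed (use R_pos in auto)
    also have "\<dots> \<le> growth_potential q (?R 0) + norm_growth k A / 2 * X"
      using s norm_growth_pos[OF gram_nonneg] by simp
    also have "\<dots> < growth_potential q e"
      by (rule budget)
    finally show "0 < e - ?R s"
      using growth_potential_less_iff[OF exponent_ge2 R_pos e(1)] by simp
  qed (use t in auto)
  moreover have "sqrt (sq_norm t) \<le> ?R t"
    using \<rho> by simp
  ultimately show ?thesis by linarith
qed

lemma drift_ge_neg:
  assumes nonneg: "\<forall>j'<k. 0 \<le> u t j'" and small: "\<forall>j'<k. \<bar>u t j'\<bar> \<le> 1/2" and j: "j < k"
  shows "- (real k * deriv_bound) * u t j \<le> drift t j"
proof -
  have corr_nonneg: "0 \<le> corr_deriv c (u t j')" if "j' < k" for j'
    using nonneg small that by (intro corr_deriv_nonneg) auto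
  have "corr_deriv c (u t j') * u t j' \<le> deriv_bound" if j': "j' < k" for j'
  proof -
    have "\<bar>corr_deriv c (u t j')\<bar> \<le> deriv_bound * \<bar>u t j'\<bar> ^ (q - 1)"
      using small j' by (intro abs_corr_deriv_le) auto
    also have "\<dots> \<le> deriv_bound"
      using small j' deriv_bound_nonneg by (intro mult_left_le power_le_one) auto
    finally have "corr_deriv c (u t j') \<le> deriv_bound"
      by simp
    moreover have "corr_deriv c (u t j') * u t j' \<le> corr_deriv c (u t j')"
      using small nonneg j' corr_nonneg[OF j'] by (intro mult_left_le) auto
    ultimately show ?thesis by linarith
  qed
  then have "u t j * (\<Sum>j'<k. corr_deriv c (u t j') * u t j') \<le> u t j * (real k * deriv_bound)"
    using nonneg j sum_mono[of "{..<k}" _ "\<lambda>_. deriv_bound"] by (intro mult_left_mono) auto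
  moreover have "0 \<le> (\<Sum>j'<k. corr_deriv c (u t j') * A j j')"
    using corr_nonneg gram_nonneg j by (intro sum_nonneg mult_nonneg_nonneg) auto
  ultimately show ?thesis
    unfolding overlap_drift_split by (simp add: algebra_simps)
qed

lemma overlaps_stay_positive:
  assumes small: "\<And>t. 0 \<le> t \<Longrightarrow> t \<le> X \<Longrightarrow> \<forall>j<k. \<bar>u t j\<bar> \<le> 1/2"
    and init: "\<forall>j<k. 0 < u 0 j" and t: "0 \<le> t" "t \<le> X" and j: "j < k"
  shows "0 < u t j"
proof (rule continuous_induction_pos[where I = "{..<k}" and g = "\<lambda>j s. u s j"])
  fix s j assume s: "0 \<le> s" "s \<le> X" and j: "j \<in> {..<k}"
    and nonneg: "\<And>\<tau> j. 0 \<le> \<tau> \<Longrightarrow> \<tau> < s \<Longrightarrow> j \<in> {..<k} \<Longrightarrow> 0 \<le> u \<tau> j"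
  have "u 0 j * exp (- (real k * deriv_bound) * s) \<le> u s j"
  proof (rule gronwall_exp_lower[OF s(1)])
    show "continuous_on {0..s} (\<lambda>\<tau>. u \<tau> j)"
      by (rule continuous_on_subset[OF overlap_cont]) auto
    fix \<tau> assume \<tau>: "0 < \<tau>" "\<tau> < s"
    then have "\<forall>j'<k. \<bar>u \<tau> j'\<bar> \<le> 1/2" "\<forall>j'<k. 0 \<le> u \<tau> j'"
      using small[of \<tau>] nonneg[of \<tau>] s by auto
    with \<tau> j show "\<exists>D. ((\<lambda>\<tau>. u \<tau> j) has_real_derivative D) (at \<tau>)
        \<and> - (real k * deriv_bound) * u \<tau> j \<le> D"
      by (intro exI[of _ "drift \<tau> j"] conjI overlap_deriv drift_ge_neg) auto
  qed
  moreover have "0 < u 0 j * exp (- (real k * deriv_bound) * s)"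
    using init j by simp
  ultimately show "0 < u s j" by linarith
qed (use t j in \<open>auto intro: continuous_on_subset[OF overlap_cont]\<close>)

lemma abs_overlaps_le_half:
  assumes "\<forall>j<k. \<bar>u t j\<bar> \<le> 1 / (2 * real k)"
  shows "\<forall>j<k. \<bar>u t j\<bar> \<le> 1/2"
proof -
  have "1 / (2 * real k) \<le> 1/2"
    using dim_pos by (simp add: field_simps)
  with assms show ?thesis
    by (meson order_trans)
qed

lemma half_sum_corr_deriv_le_sum_drift:
  assumes nonneg: "\<forall>j<k. 0 \<le> u t j" and small: "\<forall>j<k. \<bar>u t j\<bar> \<le> 1 / (2 * real k)"
  shows "(\<Sum>j<k. corr_deriv c (u t j) / 2) \<le> (\<Sum>j<k. drift t j)"
proof -
  let ?\<Psi> = "overlap_sum t"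
  have half: "\<forall>j<k. \<bar>u t j\<bar> \<le> 1/2"
    using small by (rule abs_overlaps_le_half)
  have "?\<Psi> \<le> (\<Sum>j<k. 1 / (2 * real k))"
    unfolding overlap_sum_def using small by (intro sum_mono) auto
  then have \<Psi>_le: "?\<Psi> \<le> 1/2"
    using dim_pos by simp
  have \<Psi>_nonneg: "0 \<le> ?\<Psi>"
    unfolding overlap_sum_def using nonneg by (intro sum_nonneg) auto
  have "(\<Sum>j'<k. corr_deriv c (u t j') / 2)
      \<le> (\<Sum>j'<k. corr_deriv c (u t j') * ((\<Sum>j<k. A j j') - u t j' * ?\<Psi>))"
  proof (rule sum_mono)
    fix j' assume j': "j' \<in> {..<k}"
    have "1 \<le> (\<Sum>j<k. A j j')"
      using member_le_sum[of j' "{..<k}" "\<lambda>j. A j j'"] gram_nonneg gram_diag j' by auto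
    moreover have "u t j' * ?\<Psi> \<le> (1/2) * (1/2)"
      using half nonneg j' \<Psi>_le \<Psi>_nonneg by (intro mult_mono) auto
    ultimately have "1/2 \<le> (\<Sum>j<k. A j j') - u t j' * ?\<Psi>"
      by linarith
    moreover have "0 \<le> corr_deriv c (u t j')"
      using nonneg half j' by (intro corr_deriv_nonneg) auto
    ultimately have "corr_deriv c (u t j') * (1/2)
        \<le> corr_deriv c (u t j') * ((\<Sum>j<k. A j j') - u t j' * ?\<Psi>)"
      by (intro mult_left_mono)
    then show "corr_deriv c (u t j') / 2 \<le> corr_deriv c (u t j') * ((\<Sum>j<k. A j j') - u t j' * ?\<Psi>)"
      by simp
  qed
  also have "\<dots> = (\<Sum>j<k. drift t j)"
    unfolding overlap_sum_def by (rule sum_overlap_drift[symmetric])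
  finally show ?thesis .
qed

lemma sum_drift_ge:
  assumes nonneg: "\<forall>j<k. 0 \<le> u t j" and small: "\<forall>j<k. \<bar>u t j\<bar> \<le> 1 / (2 * real k)"
  shows "sum_growth k * overlap_sum t ^ (q - 1) \<le> (\<Sum>j<k. drift t j)"
proof -
  have half: "\<forall>j<k. \<bar>u t j\<bar> \<le> 1/2"
    using small by (rule abs_overlaps_le_half)
  obtain j0 where j0: "j0 < k" "overlap_sum t / real k \<le> u t j0"
    using ex_ge_average[of "{..<k}" "u t"] dim_pos unfolding overlap_sum_def
    by (auto simp: lessThan_empty_iff)
  have "0 \<le> overlap_sum t"
    unfolding overlap_sum_def using nonneg by (intro sum_nonneg) auto
  then have "c q * real q * (overlap_sum t / real k) ^ (q - 1) \<le> c q * real q * u t j0 ^ (q - 1)"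
    using j0(2) coeff_leading by (intro mult_left_mono power_mono) auto
  also have "\<dots> \<le> corr_deriv c (u t j0)"
    using nonneg half j0(1) by (intro corr_deriv_ge_leading) auto
  also have "\<dots> / 2 \<le> (\<Sum>j<k. corr_deriv c (u t j) / 2)"
    using nonneg half j0(1) by (intro member_le_sum[of j0 "{..<k}" "\<lambda>j. corr_deriv c (u t j) / 2"])
      (auto intro: corr_deriv_nonneg)
  also have "\<dots> \<le> (\<Sum>j<k. drift t j)"
    using nonneg small by (rule half_sum_corr_deriv_le_sum_drift)
  finally show ?thesis
    unfolding sum_growth_def by (simp add: power_divide)
qed

lemma norm_escapes:
  assumes X: "0 \<le> X" and init: "\<forall>j<k. 0 < u 0 j"
    and budget: "growth_potential q (1/2) < growth_potential q (overlap_sum 0) + sum_growth k * X"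
  shows "\<exists>t. 0 \<le> t \<and> t \<le> X \<and> 1 / (2 * real k) \<le> sqrt (sq_norm t)"
proof (rule ccontr)
  assume "\<not> ?thesis"
  then have small: "\<forall>j<k. \<bar>u t j\<bar> \<le> 1 / (2 * real k)" if "0 \<le> t" "t \<le> X" for t
    using that by (intro abs_overlaps_le_of_norm_le) (meson not_le less_imp_le)
  then have half: "\<forall>j<k. \<bar>u t j\<bar> \<le> 1/2" if "0 \<le> t" "t \<le> X" for t
    using that abs_overlaps_le_half by blast
  have pos: "0 < u t j" if "0 \<le> t" "t \<le> X" "j < k" for t j
    using overlaps_stay_positive[OF half init] that by blast
  have sum_pos: "0 < overlap_sum t" if "0 \<le> t" "t \<le> X" for t
    unfolding overlap_sum_def using pos that dim_pos by (intro sum_pos) (auto simp: lessThan_empty_iff)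
  have "growth_potential q (overlap_sum 0) + sum_growth k * X \<le> growth_potential q (overlap_sum X)"
  proof (rule growth_potential_increment_ge[OF exponent_ge2 X])
    show "continuous_on {0..X} overlap_sum"
      unfolding overlap_sum_def[abs_def]
      by (intro continuous_intros continuous_on_subset[OF overlap_cont]) auto
    fix \<tau> assume \<tau>: "0 < \<tau>" "\<tau> < X"
    have "(overlap_sum has_real_derivative (\<Sum>j<k. drift \<tau> j)) (at \<tau>)"
      unfolding overlap_sum_def[abs_def] using \<tau> half by (intro DERIV_sum overlap_deriv) auto
    moreover have "sum_growth k * overlap_sum \<tau> ^ (q - 1) \<le> (\<Sum>j<k. drift \<tau> j)"
      using pos small \<tau> by (intro sum_drift_ge) (auto intro: less_imp_le)
    ultimately show "\<exists>D. (overlap_sum has_real_derivative D) (at \<tau>)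
        \<and> sum_growth k * overlap_sum \<tau> ^ (q - 1) \<le> D"
      by blast
  qed (use sum_pos in auto)
  with budget have "growth_potential q (1/2) < growth_potential q (overlap_sum X)"
    by simp
  then have "1/2 < overlap_sum X"
    using growth_potential_less_iff[OF exponent_ge2 _ sum_pos] X by simp
  moreover have "overlap_sum X \<le> (\<Sum>j<k. 1 / (2 * real k))"
    unfolding overlap_sum_def using small[OF X] by (intro sum_mono) auto
  ultimately show False
    using dim_pos by simp
qed

end

lemma (in correlation_series) overlap_dynamics_of_flow:
  assumes "1 \<le> k" and "\<And>j j'. j < k \<Longrightarrow> j' < k \<Longrightarrow> 0 \<le> A j j'" and "\<And>j. j < k \<Longrightarrow> A j j = 1"
    and iv: "index_vectors k A d V" and flow: "sphere_grad_flow c k V d w"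
  shows "overlap_dynamics c q k A (\<lambda>t j. ip d (V j) (w t))"
proof unfold_locales
  fix t j assume "0 < t" "\<forall>j'<k. \<bar>ip d (V j') (w t)\<bar> \<le> 1/2" "j < k"
  then show "((\<lambda>s. ip d (V j) (w s)) has_real_derivative
      overlap_drift c k A (\<lambda>j. ip d (V j) (w t)) j) (at t)"
    by (rule flow_overlap_has_derivative[OF flow iv])
qed (use assms continuous_on_flow_overlap[OF flow] in auto)

section \<open>Escape time\<close>

lemma time_scale_eq_sqrt_power:
  assumes "3 \<le> q"
  shows "time_scale q d = sqrt (real d) ^ (q - 2)"
proof (cases "d = 0")
  case True
  then show ?thesis using assms by (simp add: time_scale_def)
next
  case False
  have exponent: "real q / 2 - 1 = 1/2 * real (q - 2)"
    using assms by (simp add: of_nat_diff field_simps)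
  have "time_scale q d = real d powr (1/2 * real (q - 2))"
    using assms unfolding time_scale_def exponent by simp
  also have "\<dots> = (real d powr (1/2)) powr real (q - 2)"
    by (simp add: powr_powr)
  also have "\<dots> = sqrt (real d) ^ (q - 2)"
    using False by (simp add: powr_half_sqrt powr_realpow)
  finally show ?thesis .
qed

lemma time_scale_nonneg: "0 < d \<Longrightarrow> 0 \<le> time_scale q d"
  unfolding time_scale_def by simp

lemma time_scale_at_top:
  assumes "2 \<le> q"
  shows "filterlim (time_scale q) at_top sequentially"
proof (cases "q = 2")
  case True
  then show ?thesis
    unfolding time_scale_def using filterlim_compose[OF ln_at_top filterlim_real_sequentially] by simp
next
  case False
  with assms have q: "3 \<le> q" by simp
  have "filterlim (\<lambda>d. sqrt (real d)) at_top sequentially"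
    by (rule filterlim_compose[OF sqrt_at_top filterlim_real_sequentially])
  moreover have "\<forall>\<^sub>F d in sequentially. sqrt (real d) \<le> time_scale q d"
  proof (rule eventually_sequentiallyI[of 1])
    fix d :: nat assume "1 \<le> d"
    then have "sqrt (real d) ^ 1 \<le> sqrt (real d) ^ (q - 2)"
      using q by (intro power_increasing) auto
    then show "sqrt (real d) \<le> time_scale q d"
      using time_scale_eq_sqrt_power[OF q] by simp
  qed
  ultimately show ?thesis by (rule filterlim_at_top_mono)
qed

text \<open>At the initial scale \<open>x / \<surd>d\<close> the potential is an affine function of the time scale
  with negative slope; this is where the time scale comes from.\<close>
lemma growth_potential_scaled:
  assumes "2 \<le> q" and "0 < x"
  obtains a b where "0 < a"
    and "\<And>d. 0 < d \<Longrightarrow> growth_potential q (x / sqrt (real d)) = b - a * time_scale q d"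
proof (cases "q = 2")
  case True
  show ?thesis
  proof (rule that[of "1/2" "ln x"])
    fix d :: nat assume "0 < d"
    then show "growth_potential q (x / sqrt (real d)) = ln x - 1/2 * time_scale q d"
      using True assms(2) by (simp add: growth_potential_def time_scale_def ln_div ln_sqrt)
  qed simp
next
  case False
  with assms(1) have q: "3 \<le> q" by simp
  show ?thesis
  proof (rule that[of "1 / (real (q - 2) * x ^ (q - 2))" 0])
    show "0 < 1 / (real (q - 2) * x ^ (q - 2))"
      using q assms(2) by simp
    fix d :: nat assume "0 < d"
    then show "growth_potential q (x / sqrt (real d)) = 0 - 1 / (real (q - 2) * x ^ (q - 2)) * time_scale q d"
      using False by (simp add: growth_potential_def time_scale_eq_sqrt_power[OF q] power_divide)
  qed
qed

definition small_init_flow :: "(nat \<Rightarrow> real) \<Rightarrow> nat \<Rightarrow> (nat \<Rightarrow> nat \<Rightarrow> real) \<Rightarrow> real \<Rightarrow> real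
    \<Rightarrow> nat \<Rightarrow> (nat \<Rightarrow> nat \<Rightarrow> real) \<Rightarrow> (real \<Rightarrow> nat \<Rightarrow> real) \<Rightarrow> bool" where
  "small_init_flow c k A \<alpha> \<beta> d V w \<longleftrightarrow>
     index_vectors k A d V \<and> sphere_grad_flow c k V d w \<and>
     (\<forall>j<k. \<alpha> / sqrt (real d) \<le> ip d (V j) (w 0) \<and> ip d (V j) (w 0) \<le> \<beta> / sqrt (real d))"

context correlation_series
begin

lemma flow_overlap_norm_escapes:
  assumes k: "1 \<le> k" and A_nonneg: "\<And>j j'. j < k \<Longrightarrow> j' < k \<Longrightarrow> 0 \<le> A j j'"
    and A_diag: "\<And>j. j < k \<Longrightarrow> A j j = 1" and \<alpha>: "0 < \<alpha>" and d: "0 < d"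
    and flow: "small_init_flow c k A \<alpha> \<beta> d V w" and X: "0 \<le> X"
    and budget: "growth_potential q (1/2)
      < growth_potential q (real k * \<alpha> / sqrt (real d)) + sum_growth k * X"
  shows "\<exists>T. 0 \<le> T \<and> T \<le> X \<and> 1 / (2 * real k) \<le> u_norm k V d (w T)"
proof -
  interpret overlap_dynamics c q k A "\<lambda>t j. ip d (V j) (w t)"
    using flow unfolding small_init_flow_def by (intro overlap_dynamics_of_flow k A_nonneg A_diag) auto
  have init: "\<forall>j<k. \<alpha> / sqrt (real d) \<le> ip d (V j) (w 0)"
    using flow unfolding small_init_flow_def by auto
  have "0 < \<alpha> / sqrt (real d)"
    using \<alpha> d by simp
  with init have init_pos: "\<forall>j<k. 0 < ip d (V j) (w 0)"
    by (meson less_le_trans)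
  have "(\<Sum>j<k. \<alpha> / sqrt (real d)) \<le> overlap_sum 0"
    unfolding overlap_sum_def using init by (intro sum_mono) auto
  then have lower: "real k * \<alpha> / sqrt (real d) \<le> overlap_sum 0"
    by simp
  have lower_pos: "0 < real k * \<alpha> / sqrt (real d)"
    using k \<alpha> d by simp
  have "growth_potential q (real k * \<alpha> / sqrt (real d)) \<le> growth_potential q (overlap_sum 0)"
    using growth_potential_le_iff[OF exponent_ge2 lower_pos] lower lower_pos by simp
  with budget have "growth_potential q (1/2) < growth_potential q (overlap_sum 0) + sum_growth k * X"
    by linarith
  then obtain T where "0 \<le> T" "T \<le> X" "1 / (2 * real k) \<le> sqrt (sq_norm T)"
    using norm_escapes[OF X init_pos] by blast
  then show ?thesis
    by (auto simp: u_norm_def sq_norm_def)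
qed

lemma flow_overlap_norm_stays_below:
  assumes k: "1 \<le> k" and A_nonneg: "\<And>j j'. j < k \<Longrightarrow> j' < k \<Longrightarrow> 0 \<le> A j j'"
    and A_diag: "\<And>j. j < k \<Longrightarrow> A j j = 1" and \<alpha>: "0 < \<alpha>" "\<alpha> \<le> \<beta>" and d: "0 < d"
    and flow: "small_init_flow c k A \<alpha> \<beta> d V w" and e: "0 < e" "e \<le> 1/2"
    and budget: "growth_potential q (sqrt (2 * real k) * \<beta> / sqrt (real d)) + norm_growth k A / 2 * X
      < growth_potential q e"
    and t: "0 \<le> t" "t \<le> X"
  shows "u_norm k V d (w t) < e"
proof -
  interpret overlap_dynamics c q k A "\<lambda>t j. ip d (V j) (w t)"
    using flow unfolding small_init_flow_def by (intro overlap_dynamics_of_flow k A_nonneg A_diag) auto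
  define \<rho> where "\<rho> = real k * \<beta>\<^sup>2 / real d"
  have \<rho>: "0 < \<rho>"
    unfolding \<rho>_def using k \<alpha> d by simp
  have "0 < \<alpha> / sqrt (real d)"
    using \<alpha> d by simp
  then have init: "\<forall>j<k. 0 \<le> ip d (V j) (w 0) \<and> ip d (V j) (w 0) \<le> \<beta> / sqrt (real d)"
    using flow unfolding small_init_flow_def by (meson less_le_trans less_imp_le)
  have "sq_norm 0 \<le> (\<Sum>j<k. (\<beta> / sqrt (real d))\<^sup>2)"
    unfolding sq_norm_def using init by (intro sum_mono power_mono) auto
  then have "sq_norm 0 \<le> \<rho>"
    unfolding \<rho>_def using d by (simp add: power_divide)
  then have "sqrt (sq_norm 0 + \<rho>) \<le> sqrt (2 * \<rho>)"
    by simp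
  also have "\<dots> = sqrt (2 * real k) * \<beta> / sqrt (real d)"
    unfolding \<rho>_def using \<alpha> by (simp add: real_sqrt_mult real_sqrt_divide)
  finally have "growth_potential q (sqrt (sq_norm 0 + \<rho>))
      \<le> growth_potential q (sqrt (2 * real k) * \<beta> / sqrt (real d))"
    using growth_potential_le_iff[OF exponent_ge2] \<rho> sq_norm_nonneg[of 0] k \<alpha> d by simp
  with budget have "growth_potential q (sqrt (sq_norm 0 + \<rho>)) + norm_growth k A / 2 * X
      < growth_potential q e"
    by linarith
  then have "sqrt (sq_norm t) < e"
    using norm_stays_below[OF e \<rho>] t by blast
  then show ?thesis
    by (simp add: u_norm_def sq_norm_def)
qed

lemma eventually_time_scale_gt: "\<forall>\<^sub>F d in sequentially. M < time_scale q d \<and> 0 < d"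
proof -
  have "\<forall>\<^sub>F d in sequentially. M < time_scale q d"
    using time_scale_at_top[OF exponent_ge2] unfolding filterlim_at_top_dense by blast
  then show ?thesis
    using eventually_gt_at_top[of 0] by (rule eventually_conj)
qed

lemma overlap_norm_reaches_within_time_scale:
  assumes k: "1 \<le> k" and A_nonneg: "\<And>j j'. j < k \<Longrightarrow> j' < k \<Longrightarrow> 0 \<le> A j j'"
    and A_diag: "\<And>j. j < k \<Longrightarrow> A j j = 1" and \<alpha>: "0 < \<alpha>"
  shows "\<exists>C>0. \<forall>\<^sub>F d in sequentially. \<forall>V w. small_init_flow c k A \<alpha> \<beta> d V w \<longrightarrow>
           (\<exists>T. 0 \<le> T \<and> T \<le> C * time_scale q d \<and> 1 / (2 * real k) \<le> u_norm k V d (w T))"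
proof -
  obtain a b where a: "0 < a"
    and G: "\<And>d. 0 < d \<Longrightarrow> growth_potential q (real k * \<alpha> / sqrt (real d)) = b - a * time_scale q d"
    using growth_potential_scaled[OF exponent_ge2, of "real k * \<alpha>"] k \<alpha> by auto
  define C where "C = 2 * a / sum_growth k"
  have C: "0 < C"
    unfolding C_def using a sum_growth_pos[OF k] by simp
  have "\<forall>\<^sub>F d in sequentially. \<forall>V w. small_init_flow c k A \<alpha> \<beta> d V w \<longrightarrow>
           (\<exists>T. 0 \<le> T \<and> T \<le> C * time_scale q d \<and> 1 / (2 * real k) \<le> u_norm k V d (w T))"
  proof (rule eventually_mono[OF eventually_time_scale_gt], intro allI impI)
    fix d V w
    assume d: "(growth_potential q (1/2) - b) / a < time_scale q d \<and> 0 < d"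
      and flow: "small_init_flow c k A \<alpha> \<beta> d V w"
    have "sum_growth k * (C * time_scale q d) = 2 * (a * time_scale q d)"
      unfolding C_def using sum_growth_pos[OF k] by simp
    moreover have "growth_potential q (1/2) < b + a * time_scale q d"
      using d a by (simp add: pos_divide_less_eq algebra_simps)
    moreover have "growth_potential q (real k * \<alpha> / sqrt (real d)) = b - a * time_scale q d"
      using G d by blast
    ultimately have "growth_potential q (1/2)
        < growth_potential q (real k * \<alpha> / sqrt (real d)) + sum_growth k * (C * time_scale q d)"
      by linarith
    then show "\<exists>T. 0 \<le> T \<and> T \<le> C * time_scale q d \<and> 1 / (2 * real k) \<le> u_norm k V d (w T)"
      using flow_overlap_norm_escapes[OF k A_nonneg A_diag \<alpha> _ flow] C time_scale_nonneg d by simp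
  qed
  with C show ?thesis by blast
qed

lemma overlap_norm_small_before_time_scale:
  assumes k: "1 \<le> k" and A_nonneg: "\<And>j j'. j < k \<Longrightarrow> j' < k \<Longrightarrow> 0 \<le> A j j'"
    and A_diag: "\<And>j. j < k \<Longrightarrow> A j j = 1" and \<alpha>: "0 < \<alpha>" "\<alpha> \<le> \<beta>" and \<epsilon>: "0 < \<epsilon>"
  shows "\<exists>c'>0. \<forall>\<^sub>F d in sequentially. \<forall>V w. small_init_flow c k A \<alpha> \<beta> d V w \<longrightarrow>
           (\<forall>t. 0 \<le> t \<and> t \<le> c' * time_scale q d \<longrightarrow> u_norm k V d (w t) < \<epsilon>)"
proof -
  define e where "e = min \<epsilon> (1/2)"
  have e: "0 < e" "e \<le> 1/2" "e \<le> \<epsilon>"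
    using \<epsilon> unfolding e_def by auto
  obtain a b where a: "0 < a" and G: "\<And>d. 0 < d \<Longrightarrow>
      growth_potential q (sqrt (2 * real k) * \<beta> / sqrt (real d)) = b - a * time_scale q d"
    using growth_potential_scaled[OF exponent_ge2, of "sqrt (2 * real k) * \<beta>"] k \<alpha> by auto
  have K: "0 < norm_growth k A"
    using A_nonneg by (rule norm_growth_pos)
  define c' where "c' = a / norm_growth k A"
  have c': "0 < c'"
    unfolding c'_def using a K by simp
  have "\<forall>\<^sub>F d in sequentially. \<forall>V w. small_init_flow c k A \<alpha> \<beta> d V w \<longrightarrow>
           (\<forall>t. 0 \<le> t \<and> t \<le> c' * time_scale q d \<longrightarrow> u_norm k V d (w t) < \<epsilon>)"
  proof (rule eventually_mono[OF eventually_time_scale_gt], intro allI impI)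
    fix d V w t
    assume d: "2 * (b - growth_potential q e) / a < time_scale q d \<and> 0 < d"
      and flow: "small_init_flow c k A \<alpha> \<beta> d V w" and t: "0 \<le> t \<and> t \<le> c' * time_scale q d"
    have "norm_growth k A / 2 * (c' * time_scale q d) = (a * time_scale q d) / 2"
      unfolding c'_def using K by simp
    moreover have "b - growth_potential q e < (a * time_scale q d) / 2"
      using d a by (simp add: pos_divide_less_eq mult.commute)
    moreover have "growth_potential q (sqrt (2 * real k) * \<beta> / sqrt (real d)) = b - a * time_scale q d"
      using G d by blast
    ultimately have "growth_potential q (sqrt (2 * real k) * \<beta> / sqrt (real d))
        + norm_growth k A / 2 * (c' * time_scale q d) < growth_potential q e"
      by linarith
    then have "u_norm k V d (w t) < e"
      using flow_overlap_norm_stays_below[OF k A_nonneg A_diag \<alpha> _ flow e(1,2)] d t by blast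
    with e(3) show "u_norm k V d (w t) < \<epsilon>"
      by simp
  qed
  with c' show ?thesis by blast
qed

end

lemma correlation_series_coef_c:
  assumes b0: "b 0 = 0" and a_L2: "summable (\<lambda>p. (a p)\<^sup>2)" and b_L2: "summable (\<lambda>p. (b p)\<^sup>2)"
    and lead: "coef_c a b (info_exp b) > 0" and nonneg: "\<forall>p\<ge>info_exp b. coef_c a b p \<ge> 0"
    and q2: "2 \<le> info_exp b"
  shows "correlation_series (coef_c a b) (info_exp b)"
proof
  show below: "coef_c a b p = 0" if "p < info_exp b" for p
  proof -
    have "b p = 0"
    proof (rule ccontr)
      assume "b p \<noteq> 0"
      with b0 have "1 \<le> p \<and> b p \<noteq> 0"
        by (cases p) auto
      then have "info_exp b \<le> p"
        unfolding info_exp_def by (rule Least_le)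
      with that show False by simp
    qed
    then show ?thesis unfolding coef_c_def by simp
  qed
  show "0 \<le> coef_c a b p" for p
    using below[of p] nonneg by (cases "p < info_exp b") auto
  show "summable (\<lambda>p. coef_c a b p * real p * (1/2) ^ p)"
  proof (rule summable_comparison_test')
    show "summable (\<lambda>p. ((a p)\<^sup>2 + (b p)\<^sup>2) / 2)"
      using a_L2 b_L2 by (intro summable_divide summable_add)
    fix p
    have "real p * (1/2) ^ p \<le> 1"
      using of_nat_less_two_power[of p, where 'a = real] by (simp add: power_one_over field_simps)
    then have "\<bar>a p * b p\<bar> * (real p * (1/2) ^ p) \<le> \<bar>a p * b p\<bar>"
      by (intro mult_left_le) auto
    moreover have "2 * \<bar>a p\<bar> * \<bar>b p\<bar> \<le> (a p)\<^sup>2 + (b p)\<^sup>2"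
      using sum_squares_bound[of "\<bar>a p\<bar>" "\<bar>b p\<bar>"] by simp
    ultimately show "norm (coef_c a b p * real p * (1/2) ^ p) \<le> ((a p)\<^sup>2 + (b p)\<^sup>2) / 2"
      unfolding coef_c_def by (simp add: abs_mult mult.assoc)
  qed
qed (use lead q2 in auto)

theorem theorem1:
  fixes k :: nat and A :: "nat \<Rightarrow> nat \<Rightarrow> real" and a b :: "nat \<Rightarrow> real"
    and \<alpha> \<beta> :: real
  assumes k_pos: "1 \<le> k"
    and A_sym: "\<forall>j<k. \<forall>j'<k. A j j' = A j' j"
    and A_unit: "\<forall>j<k. A j j = 1"
    and A_nonneg: "\<forall>j<k. \<forall>j'<k. 0 \<le> A j j'"
    and a0: "a 0 = 0" and b0: "b 0 = 0"
    and a_L2: "summable (\<lambda>p. (a p)\<^sup>2)" and b_L2: "summable (\<lambda>p. (b p)\<^sup>2)"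
    and c_pstar: "coef_c a b (info_exp b) > 0"
    and c_nonneg: "\<forall>p\<ge>info_exp b. coef_c a b p \<ge> 0"
    and c_summ: "summable (\<lambda>p. coef_c a b p * real p * lambda_max k A powr (real p / 2))"
    and pstar_ge2: "2 \<le> info_exp b"
    and alpha_pos: "0 < \<alpha>" and alpha_le_beta: "\<alpha> \<le> \<beta>"
  shows
   "(\<exists>C>0. \<exists>\<epsilon>>0. \<exists>D. \<forall>d\<ge>D. \<forall>V w.
       index_vectors k A d V \<and> sphere_grad_flow (coef_c a b) k V d w \<and>
       (\<forall>j<k. \<alpha> / sqrt (real d) \<le> ip d (V j) (w 0) \<and> ip d (V j) (w 0) \<le> \<beta> / sqrt (real d))
       \<longrightarrow> (\<exists>T. 0 \<le> T \<and> T \<le> C * time_scale (info_exp b) d \<and> \<epsilon> \<le> u_norm k V d (w T)))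
    \<and>
    (\<forall>\<epsilon>>0. \<exists>c>0. \<exists>D. \<forall>d\<ge>D. \<forall>V w.
       index_vectors k A d V \<and> sphere_grad_flow (coef_c a b) k V d w \<and>
       (\<forall>j<k. \<alpha> / sqrt (real d) \<le> ip d (V j) (w 0) \<and> ip d (V j) (w 0) \<le> \<beta> / sqrt (real d))
       \<longrightarrow> (\<forall>t. 0 \<le> t \<and> t \<le> c * time_scale (info_exp b) d \<longrightarrow> u_norm k V d (w t) < \<epsilon>))"
proof -
  have series: "correlation_series (coef_c a b) (info_exp b)"
    using b0 a_L2 b_L2 c_pstar c_nonneg pstar_ge2 by (rule correlation_series_coef_c)
  have gram_nonneg: "\<And>j j'. j < k \<Longrightarrow> j' < k \<Longrightarrow> 0 \<le> A j j'"
    using A_nonneg by blast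
  have gram_diag: "\<And>j. j < k \<Longrightarrow> A j j = 1"
    using A_unit by blast
  note reach = correlation_series.overlap_norm_reaches_within_time_scale[OF series, of k A \<alpha> \<beta>,
      OF k_pos gram_nonneg gram_diag alpha_pos]
  note stay = correlation_series.overlap_norm_small_before_time_scale[OF series, of k A \<alpha> \<beta>,
      OF k_pos gram_nonneg gram_diag alpha_pos alpha_le_beta]
  have "0 < 1 / (2 * real k)"
    using k_pos by simp
  with reach stay show ?thesis
    unfolding small_init_flow_def eventually_sequentially by blast
qed

end
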